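(* Let $G$ be a countably infinite locally finite group. For every nondecreasing function $f\colon\mathbb{R}_+\to\mathbb{R}_+$ with $\lim_{x\to\infty}f(x)=\infty$ there exists a proper left invariant metric $d_G$ on $G$ such that $f$ is not a $0$-dimensional control function of $(G,d_G)$.
   Context: A group is locally finite if every finitely generated subgroup is finite. A metric $d_G$ on $G$ is proper left invariant if $d_G(gh,gk)=d_G(h,k)$ for all $g,h,k$ and every ball contains finitely many elements. For $s>0$, an $s$-scale chain is a finite sequence $x_0,\dots,x_m$ with $d(x_i,x_{i+1})<s$; the $s$-scale connected components of $X$ are the classes of the relation "joined by an $s$-scale chain". A function $f$ is a $0$-dimensional control function of $(X,d)$ if for every $s>0$ every $s$-scale connected component of $X$ has diameter at most $f(s)$. *)

theory Defs
  imports "HOL-Analysis.Analysis" "HOL-Algebra.Algebra"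
begin

definition locally_finite_group :: "('a, 'b) monoid_scheme \<Rightarrow> bool" where
  "locally_finite_group G \<longleftrightarrow>
     (\<forall>S. finite S \<and> S \<subseteq> carrier G \<longrightarrow> finite (generate G S))"

definition proper_left_invariant_metric :: "('a, 'b) monoid_scheme \<Rightarrow> ('a \<Rightarrow> 'a \<Rightarrow> real) \<Rightarrow> bool" where
  "proper_left_invariant_metric G d \<longleftrightarrow>
     (\<forall>x\<in>carrier G. \<forall>y\<in>carrier G. d x y = 0 \<longleftrightarrow> x = y) \<and>
     (\<forall>x\<in>carrier G. \<forall>y\<in>carrier G. d x y = d y x) \<and>
     (\<forall>x\<in>carrier G. \<forall>y\<in>carrier G. \<forall>z\<in>carrier G. d x z \<le> d x y + d y z) \<and>
     (\<forall>g\<in>carrier G. \<forall>h\<in>carrier G. \<forall>k\<in>carrier G. d (g \<otimes>\<^bsub>G\<^esub> h) (g \<otimes>\<^bsub>G\<^esub> k) = d h k) \<and>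
     (\<forall>x\<in>carrier G. \<forall>r::real. finite {y\<in>carrier G. d x y \<le> r})"

definition scale_step :: "'a set \<Rightarrow> ('a \<Rightarrow> 'a \<Rightarrow> real) \<Rightarrow> real \<Rightarrow> 'a \<Rightarrow> 'a \<Rightarrow> bool" where
  "scale_step A dist_fn r a b \<longleftrightarrow> a \<in> A \<and> b \<in> A \<and> dist_fn a b < r"

definition scale_component :: "'a set \<Rightarrow> ('a \<Rightarrow> 'a \<Rightarrow> real) \<Rightarrow> real \<Rightarrow> 'a \<Rightarrow> 'a set" where
  "scale_component A dist_fn r a = {b \<in> A. (scale_step A dist_fn r)\<^sup>*\<^sup>* a b}"

definition zero_dim_control :: "'a set \<Rightarrow> ('a \<Rightarrow> 'a \<Rightarrow> real) \<Rightarrow> (real \<Rightarrow> real) \<Rightarrow> bool" where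
  "zero_dim_control A dist_fn f \<longleftrightarrow>
     (\<forall>r>0. \<forall>a\<in>A. \<forall>b\<in>scale_component A dist_fn r a. \<forall>c\<in>scale_component A dist_fn r a. dist_fn b c \<le> f r)"

end

theory Submission
  imports Defs "HOL-Real_Asymp.Real_Asymp"
begin

(*
  A 0-dimensional control function must bound the diameter of every
  2-scale component by f 2, so it suffices to build a proper left invariant
  metric with a 2-scale component of diameter larger than any given bound M.

  1. A length function l on G (l x = 0 iff x = 1, symmetric, subadditive)
     with finite sublevel sets yields the proper left invariant metric
     d x y = l (x^-1 y); if every letter t of an alphabet T has l t < s,
     then right multiplication by words over T moves along s-scale chains.
  2. Counting: n elements generate a subgroup of order >= 2^n in an infinite
     locally finite group, while there are at most (2n+1)^m words of length
     m over the symmetric alphabet T = S u S^-1 u {1}.  As 2^n outgrows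
     (2n+1)^m, some element h of the finite subgroup W = <S> has word length
     greater than m with respect to T.
  3. Any length on a finite subgroup W of a countable locally finite group
     extends to a proper length on the whole group: outside W use a
     constant plus the level of the element in an exhausting chain of
     finite subgroups.
  Extending the word length of W, the points 1 and h lie in one 2-scale
  component (letters have length <= 1) but d 1 h > m.
*)

section \<open>Length functions and the metrics they induce\<close>

definition length_on :: "('a, 'b) monoid_scheme \<Rightarrow> 'a set \<Rightarrow> ('a \<Rightarrow> real) \<Rightarrow> bool" where
  "length_on G A l \<longleftrightarrow>
     (\<forall>x\<in>A. l x = 0 \<longleftrightarrow> x = \<one>\<^bsub>G\<^esub>) \<and>
     (\<forall>x\<in>A. l (inv\<^bsub>G\<^esub> x) = l x) \<and>
     (\<forall>x\<in>A. \<forall>y\<in>A. l (x \<otimes>\<^bsub>G\<^esub> y) \<le> l x + l y)"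

definition proper_length :: "('a, 'b) monoid_scheme \<Rightarrow> ('a \<Rightarrow> real) \<Rightarrow> bool" where
  "proper_length G l \<longleftrightarrow>
     length_on G (carrier G) l \<and> (\<forall>r. finite {x \<in> carrier G. l x \<le> r})"

text \<open>A length on a subgroup is nonnegative, since \<open>0 = l 1 \<le> l x + l x\<^sup>-\<^sup>1 = 2 l x\<close>.\<close>
lemma (in group) length_on_nonneg:
  assumes "subgroup W G" "length_on G W l" "x \<in> W"
  shows "0 \<le> l x"
proof -
  have "inv x \<in> W" "\<one> \<in> W" "x \<otimes> inv x = \<one>"
    using assms subgroup.m_inv_closed subgroup.one_closed subgroup.subset by fastforce+
  then have "l \<one> \<le> l x + l (inv x)" "l \<one> = 0" "l (inv x) = l x"
    using assms(2,3) unfolding length_on_def by metis+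
  then show ?thesis by simp
qed

lemma (in group) proper_length_metric:
  assumes "proper_length G l"
  shows "proper_left_invariant_metric G (\<lambda>x y. l (inv x \<otimes> y))"
proof -
  have l0: "\<And>x. x \<in> carrier G \<Longrightarrow> l x = 0 \<longleftrightarrow> x = \<one>"
    and linv: "\<And>x. x \<in> carrier G \<Longrightarrow> l (inv x) = l x"
    and lmult: "\<And>x y. x \<in> carrier G \<Longrightarrow> y \<in> carrier G \<Longrightarrow> l (x \<otimes> y) \<le> l x + l y"
    and lfin: "\<And>r. finite {x \<in> carrier G. l x \<le> r}"
    using assms unfolding proper_length_def length_on_def by blast+
  show ?thesis
    unfolding proper_left_invariant_metric_def
  proof (intro conjI ballI allI)
    fix x y assume x: "x \<in> carrier G" and y: "y \<in> carrier G"
    have "inv x \<otimes> y = \<one> \<longleftrightarrow> x = y"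
      using x y by (metis inv_closed inv_inv inv_equality r_inv)
    then show "l (inv x \<otimes> y) = 0 \<longleftrightarrow> x = y" using l0 x y by simp
    have "inv (inv x \<otimes> y) = inv y \<otimes> x" using x y by (simp add: inv_mult_group)
    then show "l (inv x \<otimes> y) = l (inv y \<otimes> x)" using linv[of "inv x \<otimes> y"] x y by simp
  next
    fix x y z assume x: "x \<in> carrier G" and y: "y \<in> carrier G" and z: "z \<in> carrier G"
    have "inv x \<otimes> z = (inv x \<otimes> y) \<otimes> (inv y \<otimes> z)"
      using x y z by (simp add: m_assoc[symmetric]) (simp add: m_assoc)
    then show "l (inv x \<otimes> z) \<le> l (inv x \<otimes> y) + l (inv y \<otimes> z)" using lmult x y z by simp
  next
    fix a b c assume a: "a \<in> carrier G" and b: "b \<in> carrier G" and c: "c \<in> carrier G"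
    have "inv (a \<otimes> b) \<otimes> (a \<otimes> c) = inv b \<otimes> c"
      using a b c by (simp add: inv_mult_group m_assoc[symmetric]) (simp add: m_assoc)
    then show "l (inv (a \<otimes> b) \<otimes> (a \<otimes> c)) = l (inv b \<otimes> c)" by simp
  next
    fix x r assume x: "x \<in> carrier G"
    have "{y \<in> carrier G. l (inv x \<otimes> y) \<le> r} \<subseteq> (\<lambda>z. x \<otimes> z) ` {z \<in> carrier G. l z \<le> r}"
    proof
      fix y assume "y \<in> {y \<in> carrier G. l (inv x \<otimes> y) \<le> r}"
      moreover then have "y = x \<otimes> (inv x \<otimes> y)" using x by (simp add: m_assoc[symmetric])
      ultimately show "y \<in> (\<lambda>z. x \<otimes> z) ` {z \<in> carrier G. l z \<le> r}" using x by blast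
    qed
    then show "finite {y \<in> carrier G. l (inv x \<otimes> y) \<le> r}"
      by (rule finite_subset) (simp add: lfin)
  qed
qed

lemma not_zero_dim_control_witness:
  assumes "a \<in> A" "s > 0" "(scale_step A d s)\<^sup>*\<^sup>* a b" "f s < d a b"
  shows "\<not> zero_dim_control A d f"
proof -
  have "b \<in> A" using assms(3,1) by (induction rule: rtranclp_induct) (auto simp: scale_step_def)
  then have "a \<in> scale_component A d s a" "b \<in> scale_component A d s a"
    using assms(1,3) unfolding scale_component_def by auto
  then show ?thesis using assms unfolding zero_dim_control_def by force
qed

section \<open>Words over an alphabet\<close>

definition wprod :: "('a, 'b) monoid_scheme \<Rightarrow> 'a list \<Rightarrow> 'a" where
  "wprod G xs = foldr (\<lambda>x y. x \<otimes>\<^bsub>G\<^esub> y) xs \<one>\<^bsub>G\<^esub>"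

definition words :: "('a, 'b) monoid_scheme \<Rightarrow> 'a set \<Rightarrow> 'a set" where
  "words G T = {wprod G xs | xs. set xs \<subseteq> T}"

definition wlen :: "('a, 'b) monoid_scheme \<Rightarrow> 'a set \<Rightarrow> 'a \<Rightarrow> nat" where
  "wlen G T x = (LEAST k. \<exists>xs. set xs \<subseteq> T \<and> length xs = k \<and> wprod G xs = x)"

context group
begin

lemma wprod_Nil [simp]: "wprod G [] = \<one>"
  by (simp add: wprod_def)

lemma wprod_Cons [simp]: "wprod G (x # xs) = x \<otimes> wprod G xs"
  by (simp add: wprod_def)

lemma wprod_closed: "set xs \<subseteq> carrier G \<Longrightarrow> wprod G xs \<in> carrier G"
  by (induction xs) auto

lemma wprod_append:
  "set xs \<subseteq> carrier G \<Longrightarrow> set ys \<subseteq> carrier G \<Longrightarrow> wprod G (xs @ ys) = wprod G xs \<otimes> wprod G ys"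
  by (induction xs) (auto simp: m_assoc wprod_closed)

lemma wprod_inv:
  "set xs \<subseteq> carrier G \<Longrightarrow> inv (wprod G xs) = wprod G (rev (map (\<lambda>z. inv z) xs))"
proof (induction xs)
  case (Cons x xs)
  then have "inv (wprod G (x # xs)) = wprod G (rev (map (\<lambda>z. inv z) xs)) \<otimes> wprod G [inv x]"
    by (simp add: inv_mult_group wprod_closed)
  also have "\<dots> = wprod G (rev (map (\<lambda>z. inv z) (x # xs)))"
    using Cons.prems by (subst wprod_append[symmetric]) auto
  finally show ?case .
qed simp

end

locale symmetric_alphabet = group G for G (structure) +
  fixes T
  assumes alphabet_closed: "T \<subseteq> carrier G"
    and one_in_alphabet: "\<one> \<in> T"
    and inv_in_alphabet: "t \<in> T \<Longrightarrow> inv t \<in> T"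
begin

lemma generate_eq_words: "generate G T = words G T"
proof
  show "generate G T \<subseteq> words G T"
  proof
    fix x assume "x \<in> generate G T"
    then show "x \<in> words G T"
    proof (induction rule: generate.induct)
      case one show ?case unfolding words_def by (intro CollectI exI[of _ "[]"]) simp
    next
      case (incl h) then show ?case unfolding words_def
        using alphabet_closed by (intro CollectI exI[of _ "[h]"]) auto
    next
      case (inv h) then show ?case unfolding words_def
        using alphabet_closed inv_in_alphabet by (intro CollectI exI[of _ "[inv h]"]) auto
    next
      case (eng h1 h2)
      then obtain xs ys where "set xs \<subseteq> T" "h1 = wprod G xs" "set ys \<subseteq> T" "h2 = wprod G ys"
        unfolding words_def by blast
      then show ?case unfolding words_def using alphabet_closed
        by (intro CollectI exI[of _ "xs @ ys"]) (auto simp: wprod_append)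
    qed
  qed
next
  have "set xs \<subseteq> T \<Longrightarrow> wprod G xs \<in> generate G T" for xs
    by (induction xs) (auto intro: generate.intros)
  then show "words G T \<subseteq> generate G T" unfolding words_def by blast
qed

lemma words_subgroup: "subgroup (words G T) G"
  using generate_is_subgroup[OF alphabet_closed] by (simp add: generate_eq_words)

lemma wlen_witness:
  assumes "x \<in> words G T"
  shows "\<exists>xs. set xs \<subseteq> T \<and> length xs = wlen G T x \<and> wprod G xs = x"
proof -
  from assms obtain ys where "set ys \<subseteq> T" "wprod G ys = x" unfolding words_def by blast
  then have "\<exists>xs. set xs \<subseteq> T \<and> length xs = length ys \<and> wprod G xs = x" by blast
  then show ?thesis unfolding wlen_def by (rule LeastI)
qed

lemma wlen_le: "set xs \<subseteq> T \<Longrightarrow> wlen G T (wprod G xs) \<le> length xs"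
  unfolding wlen_def by (rule Least_le) blast

lemma wlen_letter: "t \<in> T \<Longrightarrow> wlen G T t \<le> 1"
  using wlen_le[of "[t]"] alphabet_closed by auto

lemma wlen_length_on: "length_on G (words G T) (\<lambda>x. real (wlen G T x))"
proof -
  have letters: "\<And>xs. set xs \<subseteq> T \<Longrightarrow> set xs \<subseteq> carrier G" using alphabet_closed by blast
  have inv_le: "wlen G T (inv x) \<le> wlen G T x" if x: "x \<in> words G T" for x
  proof -
    obtain xs where xs: "set xs \<subseteq> T" "length xs = wlen G T x" "wprod G xs = x"
      using wlen_witness[OF x] by blast
    then have "inv x = wprod G (rev (map (\<lambda>z. inv z) xs))" using wprod_inv[OF letters[OF xs(1)]] by simp
    moreover have "set (rev (map (\<lambda>z. inv z) xs)) \<subseteq> T" using xs inv_in_alphabet by auto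
    ultimately show ?thesis using wlen_le xs by fastforce
  qed
  have "wlen G T (x \<otimes> y) \<le> wlen G T x + wlen G T y"
    if x: "x \<in> words G T" and y: "y \<in> words G T" for x y
  proof -
    obtain xs where "set xs \<subseteq> T" "length xs = wlen G T x" "wprod G xs = x"
      using wlen_witness[OF x] by blast
    moreover obtain ys where "set ys \<subseteq> T" "length ys = wlen G T y" "wprod G ys = y"
      using wlen_witness[OF y] by blast
    ultimately show ?thesis using wlen_le[of "xs @ ys"] letters by (simp add: wprod_append)
  qed
  moreover have "wlen G T x = 0 \<longleftrightarrow> x = \<one>" if "x \<in> words G T" for x
    using wlen_witness[OF that] wlen_le[of "[]"] by auto
  moreover have "wlen G T (inv x) = wlen G T x" if "x \<in> words G T" for x
    using inv_le[OF that] inv_le[of "inv x"] that subgroup.m_inv_closed[OF words_subgroup]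
      alphabet_closed subgroup.subset[OF words_subgroup] by fastforce
  ultimately show ?thesis
    unfolding length_on_def by (simp add: of_nat_add[symmetric] del: of_nat_add)
qed

text \<open>Counting words: if every element needs at most \<open>m\<close> letters, then there are
  at most \<open>|T|^m\<close> elements (shorter words are padded with the identity letter).\<close>
lemma card_words_le:
  assumes "finite T" "\<forall>x\<in>words G T. wlen G T x \<le> m"
  shows "card (words G T) \<le> card T ^ m"
proof -
  let ?L = "{xs. set xs \<subseteq> T \<and> length xs = m}"
  have "words G T \<subseteq> wprod G ` ?L"
  proof
    fix x assume x: "x \<in> words G T"
    then obtain xs where xs: "set xs \<subseteq> T" "length xs = wlen G T x" "wprod G xs = x"
      using wlen_witness by blast
    define ys where "ys = xs @ replicate (m - length xs) \<one>"
    have "wprod G (replicate k \<one>) = \<one>" for k by (induction k) auto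
    moreover have "set xs \<subseteq> carrier G" using xs(1) alphabet_closed by blast
    ultimately have "wprod G ys = x" unfolding ys_def using xs(3) by (subst wprod_append) (auto simp: wprod_closed)
    moreover have "ys \<in> ?L" unfolding ys_def using xs x assms(2) one_in_alphabet by auto
    ultimately show "x \<in> wprod G ` ?L" by blast
  qed
  then have "card (words G T) \<le> card (wprod G ` ?L)"
    using assms(1) by (intro card_mono) (auto simp: finite_lists_length_eq)
  also have "\<dots> \<le> card ?L"
    using assms(1) by (intro card_image_le) (auto simp: finite_lists_length_eq)
  also have "\<dots> = card T ^ m" using assms(1) by (rule card_lists_length_eq)
  finally show ?thesis .
qed

lemma word_scale_chain:
  assumes "\<forall>t\<in>T. l t < s" "a \<in> carrier G" "set xs \<subseteq> T"
  shows "(scale_step (carrier G) (\<lambda>x y. l (inv x \<otimes> y)) s)\<^sup>*\<^sup>* a (a \<otimes> wprod G xs)"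
  using assms(2,3)
proof (induction xs arbitrary: a)
  case (Cons t xs)
  have t: "t \<in> T" "t \<in> carrier G" and xs: "set xs \<subseteq> carrier G"
    using Cons.prems alphabet_closed by auto
  have "scale_step (carrier G) (\<lambda>x y. l (inv x \<otimes> y)) s a (a \<otimes> t)"
    unfolding scale_step_def using Cons.prems t assms(1) by (simp add: m_assoc[symmetric])
  moreover have "(scale_step (carrier G) (\<lambda>x y. l (inv x \<otimes> y)) s)\<^sup>*\<^sup>* (a \<otimes> t) ((a \<otimes> t) \<otimes> wprod G xs)"
    using Cons t by simp
  moreover have "(a \<otimes> t) \<otimes> wprod G xs = a \<otimes> wprod G (t # xs)"
    using Cons.prems t xs by (simp add: m_assoc wprod_closed)
  ultimately show ?case by (metis converse_rtranclp_into_rtranclp)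
qed simp

end

section \<open>Large finite subgroups with long words\<close>

lemma exp_beats_poly: "\<exists>n::nat. (2*n+1)^m < (2::nat)^n"
proof -
  have "filterlim (\<lambda>n::nat. real (2*n+1)^m / 2^n) (nhds 0) at_top" by real_asymp
  then have "eventually (\<lambda>n::nat. real (2*n+1)^m / 2^n < 1) at_top"
    by (rule order_tendstoD) simp
  then obtain n where "real (2*n+1)^m / 2^n < 1" by (auto simp: eventually_at_top_linorder)
  then have "real ((2*n+1)^m) < real (2^n)" by (simp add: field_simps)
  then show ?thesis by (intro exI[of _ n]) (simp only: of_nat_less_iff)
qed

context group
begin

text \<open>In an infinite locally finite group, at most \<open>n\<close> elements generate a subgroup
  of order at least \<open>2^n\<close>: adding an element outside a finite subgroup \<open>K\<close>
  adds the disjoint coset \<open>gK\<close>.\<close>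
lemma large_generated_subgroup:
  assumes lf: "locally_finite_group G" and inf: "infinite (carrier G)"
  shows "\<exists>S. finite S \<and> S \<subseteq> carrier G \<and> card S \<le> n \<and> 2^n \<le> card (generate G S)"
proof (induction n)
  case 0
  have "finite (generate G {})" using lf unfolding locally_finite_group_def by auto
  then have "0 < card (generate G {})" using generate.one[of G "{}"] by (auto simp: card_gt_0_iff)
  then show ?case by (intro exI[of _ "{}"]) auto
next
  case (Suc n)
  then obtain S where S: "finite S" "S \<subseteq> carrier G" "card S \<le> n" "2^n \<le> card (generate G S)"
    by blast
  define K where "K = generate G S"
  have K: "finite K" "subgroup K G" "K \<subseteq> carrier G"
    using lf S generate_is_subgroup[OF S(2)] generate_incl[OF S(2)]
    unfolding K_def locally_finite_group_def by auto
  obtain g where g: "g \<in> carrier G" "g \<notin> K" using K(1) inf by (metis finite_subset subsetI)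
  define K' where "K' = generate G (insert g S)"
  have S': "finite (insert g S)" "insert g S \<subseteq> carrier G" using S g by auto
  then have "finite K'" using lf unfolding K'_def locally_finite_group_def by blast
  have "K \<subseteq> K'" unfolding K_def K'_def by (rule mono_generate) auto
  moreover have "g \<in> K'" unfolding K'_def by (rule generate.incl) simp
  ultimately have "K \<union> (\<lambda>k. g \<otimes> k) ` K \<subseteq> K'" unfolding K'_def by (auto intro: generate.eng)
  moreover have "K \<inter> (\<lambda>k. g \<otimes> k) ` K = {}"
  proof (rule ccontr)
    assume "K \<inter> (\<lambda>k. g \<otimes> k) ` K \<noteq> {}"
    then obtain k k' where kk: "k \<in> K" "k' \<in> K" "g \<otimes> k = k'" by auto
    then have "g = k' \<otimes> inv k" using K(3) g by (metis in_mono inv_solve_right)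
    then show False using kk g K(2) by (simp add: subgroup.m_closed subgroup.m_inv_closed)
  qed
  moreover have "inj_on (\<lambda>k. g \<otimes> k) K" unfolding inj_on_def using K(3) g by (metis l_cancel subsetD)
  ultimately have "card K + card K \<le> card K'"
    using \<open>finite K'\<close> K(1) by (metis card_Un_disjoint card_image card_mono finite_imageI)
  then have "2^Suc n \<le> card K'" using S(4) K_def by simp
  moreover have "card (insert g S) \<le> Suc n" using S by (simp add: card_insert_if)
  ultimately show ?case using S' unfolding K'_def by blast
qed

lemma long_word_exists:
  assumes lf: "locally_finite_group G" and inf: "infinite (carrier G)"
  shows "\<exists>T. symmetric_alphabet G T \<and> finite (words G T) \<and>
           (\<exists>h\<in>words G T. m < wlen G T h)"
proof -
  obtain n :: nat where n: "(2*n+1)^m < (2::nat)^n" using exp_beats_poly by blast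
  obtain S where S: "finite S" "S \<subseteq> carrier G" "card S \<le> n" "2^n \<le> card (generate G S)"
    using large_generated_subgroup[OF lf inf] by blast
  define T where "T = S \<union> (\<lambda>z. inv z) ` S \<union> {\<one>}"
  interpret symmetric_alphabet G T
    using S(2) unfolding T_def by unfold_locales auto
  have finT: "finite T" using S(1) unfolding T_def by simp
  have finW: "finite (words G T)"
    using lf finT alphabet_closed unfolding locally_finite_group_def generate_eq_words[symmetric] by blast
  have "card T \<le> card S + card ((\<lambda>z. inv z) ` S) + card {\<one>}"
    unfolding T_def by (meson card_Un_le le_trans add_right_mono)
  then have "card T \<le> 2*n+1" using card_image_le[OF S(1), of "\<lambda>z. inv z"] S(3) by simp
  then have "card T ^ m \<le> (2*n+1)^m" by (rule power_mono) simp
  moreover have "generate G S \<subseteq> generate G T" unfolding T_def by (rule mono_generate) blast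
  then have "generate G S \<subseteq> words G T" by (simp only: generate_eq_words)
  then have "2^n \<le> card (words G T)" using S(4) card_mono[OF finW] by (meson le_trans)
  ultimately have "\<not> card (words G T) \<le> card T ^ m"
    using n by linarith
  then have "\<exists>h\<in>words G T. m < wlen G T h" by (meson card_words_le[OF finT] not_le)
  then show ?thesis using finW symmetric_alphabet_axioms by blast
qed

section \<open>Extending a length from a finite subgroup\<close>

lemma finite_subgroup_exhaustion:
  assumes lf: "locally_finite_group G" and cnt: "countable (carrier G)"
    and W: "finite W" "W \<subseteq> carrier G"
  shows "\<exists>H :: nat \<Rightarrow> 'a set. (\<forall>k. subgroup (H k) G \<and> finite (H k)) \<and> mono H \<and> W \<subseteq> H 0 \<and>
             (\<forall>x\<in>carrier G. \<exists>k. x \<in> H k)"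
proof -
  define g where "g = from_nat_into (carrier G)"
  have g: "range g = carrier G" unfolding g_def
    using range_from_nat_into[OF _ cnt] one_closed by blast
  define H where "H k = generate G (W \<union> g ` {..<k})" for k
  have gens: "finite (W \<union> g ` {..<k})" "W \<union> g ` {..<k} \<subseteq> carrier G" for k using W g by auto
  have "subgroup (H k) G \<and> finite (H k)" for k
    using generate_is_subgroup[OF gens(2)] lf gens unfolding H_def locally_finite_group_def by blast
  moreover have "mono H" unfolding H_def by (intro monoI mono_generate) auto
  moreover have "W \<subseteq> H 0" unfolding H_def by (auto intro: generate.incl)
  moreover have "\<exists>k. x \<in> H k" if x: "x \<in> carrier G" for x
  proof -
    obtain i where "x = g i" using g x by auto
    then have "x \<in> H (Suc i)" unfolding H_def by (intro generate.incl) auto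
    then show ?thesis by blast
  qed
  ultimately show ?thesis by blast
qed

lemma level_function_exists:
  assumes lf: "locally_finite_group G" and cnt: "countable (carrier G)"
    and W: "finite W" "W \<subseteq> carrier G"
  shows "\<exists>lv :: 'a \<Rightarrow> nat. (\<forall>x\<in>W. lv x = 0) \<and>
           (\<forall>x\<in>carrier G. \<forall>y\<in>carrier G. lv (x \<otimes> y) \<le> max (lv x) (lv y)) \<and>
           (\<forall>x\<in>carrier G. lv (inv x) = lv x) \<and>
           (\<forall>k. finite {x \<in> carrier G. lv x \<le> k})"
proof -
  obtain H :: "nat \<Rightarrow> 'a set" where H: "\<And>k. subgroup (H k) G" "\<And>k. finite (H k)" "mono H" "W \<subseteq> H 0"
    and cover: "\<And>x. x \<in> carrier G \<Longrightarrow> \<exists>k. x \<in> H k"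
    using finite_subgroup_exhaustion[OF assms] by blast
  define lv where "lv x = (LEAST k. x \<in> H k)" for x
  have lv_in: "x \<in> H (lv x)" if "x \<in> carrier G" for x
    unfolding lv_def using cover[OF that] by (rule LeastI_ex)
  have lv_le: "lv x \<le> k" if "x \<in> H k" for x k unfolding lv_def using that by (rule Least_le)
  have in_H: "x \<in> H k" if "x \<in> carrier G" "lv x \<le> k" for x k
    using lv_in[OF that(1)] H(3) that(2) by (auto dest: monoD)
  have "lv (x \<otimes> y) \<le> max (lv x) (lv y)" if "x \<in> carrier G" "y \<in> carrier G" for x y
    using in_H that subgroup.m_closed[OF H(1)] lv_le by (meson max.cobounded1 max.cobounded2)
  moreover have "lv (inv x) \<le> lv x" if "x \<in> carrier G" for x
    using lv_in[OF that] subgroup.m_inv_closed[OF H(1)] lv_le by blast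
  then have "lv (inv x) = lv x" if "x \<in> carrier G" for x
    using that by (metis inv_closed inv_inv le_antisym)
  moreover have "finite {x \<in> carrier G. lv x \<le> k}" for k
    using H(2)[of k] by (rule finite_subset[rotated]) (auto intro: in_H)
  moreover have "lv x = 0" if "x \<in> W" for x using lv_le[of x 0] H(4) that by auto
  ultimately show ?thesis by blast
qed

text \<open>A length on a finite subgroup \<open>W\<close> of a countable locally finite group
  extends to a proper length on the group: outside \<open>W\<close> take \<open>B + level\<close>, where
  the constant \<open>B\<close> exceeds every length in \<open>W\<close>.\<close>
lemma extend_length:
  assumes lf: "locally_finite_group G" and cnt: "countable (carrier G)"
    and W: "subgroup W G" "finite W" and lW: "length_on G W l"
  shows "\<exists>l'. proper_length G l' \<and> (\<forall>x\<in>W. l' x = l x)"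
proof -
  note Wsub = subgroup.subset[OF W(1)] and Wone = subgroup.one_closed[OF W(1)]
    and Winv = subgroup.m_inv_closed[OF W(1)] and Wmult = subgroup.m_closed[OF W(1)]
  obtain lv :: "'a \<Rightarrow> nat" where lvW: "\<And>x. x \<in> W \<Longrightarrow> lv x = 0"
    and lv_mult: "\<And>x y. x \<in> carrier G \<Longrightarrow> y \<in> carrier G \<Longrightarrow> lv (x \<otimes> y) \<le> max (lv x) (lv y)"
    and lv_inv: "\<And>x. x \<in> carrier G \<Longrightarrow> lv (inv x) = lv x"
    and lv_fin: "\<And>k. finite {x \<in> carrier G. lv x \<le> k}"
    using level_function_exists[OF lf cnt W(2) Wsub] by blast
  define B where "B = Max (l ` W) + 1"
  have lB: "l x < B" if "x \<in> W" for x
    unfolding B_def using Max_ge[OF finite_imageI[OF W(2)] imageI[OF that, of l]] by simp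
  have Bpos: "0 < B" using lB[OF Wone] length_on_nonneg[OF W(1) lW Wone] by linarith
  define l' where "l' x = (if x \<in> W then l x else B + lv x)" for x
  have l'_out: "x \<notin> W \<Longrightarrow> B \<le> l' x" for x unfolding l'_def by simp
  have coset: "x \<otimes> y \<notin> W" if "x \<in> carrier G" "y \<in> carrier G" "x \<in> W \<longleftrightarrow> y \<notin> W" for x y
  proof
    assume xy: "x \<otimes> y \<in> W"
    show False
    proof (cases "x \<in> W")
      case True
      then have "inv x \<otimes> (x \<otimes> y) \<in> W" using xy Winv Wmult by blast
      then show False using True that by (simp add: m_assoc[symmetric])
    next
      case False
      then have "(x \<otimes> y) \<otimes> inv y \<in> W" using xy that Winv Wmult by blast
      then show False using False that by (simp add: m_assoc)
    qed
  qed
  have "l' x = 0 \<longleftrightarrow> x = \<one>" if "x \<in> carrier G" for x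
    using lW Wone Bpos unfolding l'_def length_on_def by auto
  moreover have "l' (inv x) = l' x" if "x \<in> carrier G" for x
    using lW Winv[of x] Winv[of "inv x"] that lv_inv unfolding l'_def length_on_def by auto
  moreover have "l' (x \<otimes> y) \<le> l' x + l' y" if x: "x \<in> carrier G" and y: "y \<in> carrier G" for x y
  proof (cases "x \<in> W \<longleftrightarrow> y \<in> W")
    case True
    show ?thesis
    proof (cases "x \<in> W")
      case True
      then show ?thesis using \<open>x \<in> W \<longleftrightarrow> y \<in> W\<close> lW Wmult unfolding l'_def length_on_def by auto
    next
      case False
      then have "l' (x \<otimes> y) \<le> B + real (max (lv x) (lv y))"
        using lB[of "x \<otimes> y"] lv_mult[OF x y] unfolding l'_def by auto
      then show ?thesis using False True Bpos unfolding l'_def by auto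
    qed
  next
    case False
    then have "l' (x \<otimes> y) = B + lv (x \<otimes> y)" using coset[OF x y] unfolding l'_def by auto
    also have "\<dots> \<le> B + lv x + lv y" using lv_mult[OF x y] by linarith
    also have "\<dots> \<le> l' x + l' y"
      using False lvW length_on_nonneg[OF W(1) lW] unfolding l'_def by (cases "x \<in> W") auto
    finally show ?thesis .
  qed
  moreover have "finite {x \<in> carrier G. l' x \<le> r}" for r
  proof -
    have "{x \<in> carrier G. l' x \<le> r} \<subseteq> W \<union> {x \<in> carrier G. lv x \<le> nat \<lfloor>r\<rfloor>}"
      unfolding l'_def using Bpos by (auto simp: le_nat_floor)
    then show ?thesis using W(2) lv_fin by (meson finite_Un finite_subset)
  qed
  moreover have "\<forall>x\<in>W. l' x = l x" unfolding l'_def by simp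
  ultimately show ?thesis unfolding proper_length_def length_on_def by blast
qed

lemma large_scale_component:
  assumes lf: "locally_finite_group G" and cnt: "countable (carrier G)"
    and inf: "infinite (carrier G)"
  shows "\<exists>d h. proper_left_invariant_metric G d \<and>
           (scale_step (carrier G) d 2)\<^sup>*\<^sup>* \<one> h \<and> M < d \<one> h"
proof -
  obtain m :: nat where m: "M < m" using reals_Archimedean2 by blast
  obtain T h where T: "symmetric_alphabet G T" "finite (words G T)"
    and h: "h \<in> words G T" "m < wlen G T h"
    using long_word_exists[OF lf inf] by blast
  interpret symmetric_alphabet G T by (rule T(1))
  obtain l where l: "proper_length G l" "\<forall>x\<in>words G T. l x = wlen G T x"
    using extend_length[OF lf cnt words_subgroup T(2) wlen_length_on] by blast
  obtain xs where xs: "set xs \<subseteq> T" "wprod G xs = h" using h(1) unfolding words_def by blast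
  have hG: "h \<in> carrier G" using h(1) subgroup.subset[OF words_subgroup] by blast
  have "t \<in> words G T" if "t \<in> T" for t
    unfolding words_def using that alphabet_closed by (intro CollectI exI[of _ "[t]"]) auto
  then have "\<forall>t\<in>T. l t < 2" using l(2) wlen_letter by fastforce
  then have "(scale_step (carrier G) (\<lambda>x y. l (inv x \<otimes> y)) 2)\<^sup>*\<^sup>* \<one> h"
    using word_scale_chain[of l 2 \<one> xs] xs hG by simp
  moreover have "M < l (inv \<one> \<otimes> h)" using l(2) h m hG by simp
  ultimately show ?thesis using proper_length_metric[OF l(1)] by blast
qed

end

theorem mainTheorem11:
  fixes G :: "('a, 'b) monoid_scheme" and f :: "real \<Rightarrow> real"
  assumes "group G"
    and "countable (carrier G)" and "infinite (carrier G)"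
    and "locally_finite_group G"
    and "\<forall>x>0. f x \<ge> 0"
    and "mono_on {0<..} f"
    and "filterlim f at_top at_top"
  shows "\<exists>d. proper_left_invariant_metric G d \<and> \<not> zero_dim_control (carrier G) d f"
proof -
  obtain d h where d: "proper_left_invariant_metric G d"
    and chain: "(scale_step (carrier G) d 2)\<^sup>*\<^sup>* \<one>\<^bsub>G\<^esub> h" and far: "f 2 < d \<one>\<^bsub>G\<^esub> h"
    using group.large_scale_component[OF assms(1,4,2,3)] by blast
  have one: "\<one>\<^bsub>G\<^esub> \<in> carrier G" by (rule monoid.one_closed[OF group.is_monoid[OF assms(1)]])
  have "\<not> zero_dim_control (carrier G) d f"
    using not_zero_dim_control_witness[where s = 2 and f = f] one chain far by simp
  with d show ?thesis by blast
qed

end
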